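(* (1) For every $n\ge1$, $(\mathcal{Q}_n,\le)$ is a lattice. (2) For every $n\ge3$, $(\mathcal{P}_n,\le)$ is not a lattice. (3) For every $n\ge4$, $\mathcal{Q}_n\setminus\mathcal{P}_n$ with the induced order is not a lattice.
   Context: Fix $n\ge1$, $L_n=\{0,1,\dots,n\}$. A discrete quasi-copula is a map $Q:L_n\times L_n\to[0,n]$ such that (Q1) $Q(i,0)=Q(0,i)=0$ and $Q(i,n)=Q(n,i)=i$ for all $i\in L_n$; (Q2) $Q$ is non-decreasing in each argument; (Q3) $Q(i,j)+Q(i',j')\ge Q(i,j')+Q(i',j)$ for all $i\le i'$, $j\le j'$ in $L_n$ such that at least one of $i,i',j,j'$ is $0$ or $n$. A discrete copula is a map satisfying (Q1) and the 2-increasing inequality $Q(i,j)+Q(i',j')\ge Q(i,j')+Q(i',j)$ for all $i\le i'$, $j\le j'$ in $L_n$. Such a map is irreducible if its range is exactly $L_n$. $\mathcal{Q}_n$ (resp. $\mathcal{P}_n$) is the set of irreducible discrete quasi-copulas (resp. copulas) on $L_n$, ordered by the concordance order $P\le Q$ iff $P(i,j)\le Q(i,j)$ for all $i,j\in L_n$; $\mathcal{P}_n\subseteq\mathcal{Q}_n$ and subsets carry the induced order. *)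

theory Defs
  imports Complex_Main
begin

text \<open>Maps L_n x L_n -> real are represented as functions nat => nat => real,
  normalised to be 0 outside L_n x L_n (so that each map has a unique representative).\<close>

definition on_grid :: "nat \<Rightarrow> (nat \<Rightarrow> nat \<Rightarrow> real) \<Rightarrow> bool" where
  "on_grid n Q \<longleftrightarrow> (\<forall>i j. (n < i \<or> n < j) \<longrightarrow> Q i j = 0)
      \<and> (\<forall>i\<le>n. \<forall>j\<le>n. 0 \<le> Q i j \<and> Q i j \<le> real n)"

definition boundary_cond :: "nat \<Rightarrow> (nat \<Rightarrow> nat \<Rightarrow> real) \<Rightarrow> bool" where
  "boundary_cond n Q \<longleftrightarrow> (\<forall>i\<le>n. Q i 0 = 0 \<and> Q 0 i = 0 \<and> Q i n = real i \<and> Q n i = real i)"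

definition nondecr :: "nat \<Rightarrow> (nat \<Rightarrow> nat \<Rightarrow> real) \<Rightarrow> bool" where
  "nondecr n Q \<longleftrightarrow> (\<forall>i i' j. i \<le> i' \<and> i' \<le> n \<and> j \<le> n \<longrightarrow> Q i j \<le> Q i' j)
      \<and> (\<forall>i j j'. i \<le> n \<and> j \<le> j' \<and> j' \<le> n \<longrightarrow> Q i j \<le> Q i j')"

definition rect_ineq :: "(nat \<Rightarrow> nat \<Rightarrow> real) \<Rightarrow> nat \<Rightarrow> nat \<Rightarrow> nat \<Rightarrow> nat \<Rightarrow> bool" where
  "rect_ineq Q i i' j j' \<longleftrightarrow> Q i j + Q i' j' \<ge> Q i j' + Q i' j"

definition discrete_quasi_copula :: "nat \<Rightarrow> (nat \<Rightarrow> nat \<Rightarrow> real) \<Rightarrow> bool" where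
  "discrete_quasi_copula n Q \<longleftrightarrow> on_grid n Q \<and> boundary_cond n Q \<and> nondecr n Q \<and>
     (\<forall>i i' j j'. i \<le> i' \<and> i' \<le> n \<and> j \<le> j' \<and> j' \<le> n \<and>
        (i \<in> {0, n} \<or> i' \<in> {0, n} \<or> j \<in> {0, n} \<or> j' \<in> {0, n})
        \<longrightarrow> rect_ineq Q i i' j j')"

definition discrete_copula :: "nat \<Rightarrow> (nat \<Rightarrow> nat \<Rightarrow> real) \<Rightarrow> bool" where
  "discrete_copula n Q \<longleftrightarrow> on_grid n Q \<and> boundary_cond n Q \<and>
     (\<forall>i i' j j'. i \<le> i' \<and> i' \<le> n \<and> j \<le> j' \<and> j' \<le> n \<longrightarrow> rect_ineq Q i i' j j')"

definition irreducible :: "nat \<Rightarrow> (nat \<Rightarrow> nat \<Rightarrow> real) \<Rightarrow> bool" where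
  "irreducible n Q \<longleftrightarrow> (\<lambda>(i, j). Q i j) ` ({0..n} \<times> {0..n}) = real ` {0..n}"

definition QQ :: "nat \<Rightarrow> (nat \<Rightarrow> nat \<Rightarrow> real) set" where
  "QQ n = {Q. discrete_quasi_copula n Q \<and> irreducible n Q}"

definition PP :: "nat \<Rightarrow> (nat \<Rightarrow> nat \<Rightarrow> real) set" where
  "PP n = {Q. discrete_copula n Q \<and> irreducible n Q}"

definition conc_le :: "nat \<Rightarrow> (nat \<Rightarrow> nat \<Rightarrow> real) \<Rightarrow> (nat \<Rightarrow> nat \<Rightarrow> real) \<Rightarrow> bool" where
  "conc_le n P Q \<longleftrightarrow> (\<forall>i\<le>n. \<forall>j\<le>n. P i j \<le> Q i j)"

definition is_lub_in :: "'a set \<Rightarrow> ('a \<Rightarrow> 'a \<Rightarrow> bool) \<Rightarrow> 'a \<Rightarrow> 'a \<Rightarrow> 'a \<Rightarrow> bool" where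
  "is_lub_in S le x y z \<longleftrightarrow> z \<in> S \<and> le x z \<and> le y z \<and>
     (\<forall>w\<in>S. le x w \<and> le y w \<longrightarrow> le z w)"

definition is_glb_in :: "'a set \<Rightarrow> ('a \<Rightarrow> 'a \<Rightarrow> bool) \<Rightarrow> 'a \<Rightarrow> 'a \<Rightarrow> 'a \<Rightarrow> bool" where
  "is_glb_in S le x y z \<longleftrightarrow> z \<in> S \<and> le z x \<and> le z y \<and>
     (\<forall>w\<in>S. le w x \<and> le w y \<longrightarrow> le w z)"

definition lattice_on :: "'a set \<Rightarrow> ('a \<Rightarrow> 'a \<Rightarrow> bool) \<Rightarrow> bool" where
  "lattice_on S le \<longleftrightarrow> (\<forall>x\<in>S. \<forall>y\<in>S. (\<exists>z. is_lub_in S le x y z) \<and> (\<exists>z. is_glb_in S le x y z))"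

end

theory Submission
  imports Defs
begin

(* On the boundary of the grid the quasi-copula inequalities say exactly that Q is
   non-decreasing and 1-Lipschitz in each variable.  Both properties, the boundary values
   and integrality of the values survive pointwise max and min, so Q_n is a lattice with
   these as join and meet.  The negative results perturb the upper Frechet bound
   M(i,j) = min(i,j) in a small corner.  In P_n the copulas of the permutations 231, 312
   and 132, 213 have no element between the first pair and the second pair: it would
   need value at most 0 at (1,1) and at most 1 at (2,2), but at least 1 at (1,2) and
   (2,1), violating 2-increasingness on [1,2] x [1,2].  In Q_n - P_n we choose X, Y below
   A, B with max(X,Y) = min(A,B) = M' for a copula M', so the only element between them
   is M'. *)

lemma rect_ineq_of_unit_squares:
  fixes Q :: "nat \<Rightarrow> nat \<Rightarrow> real"
  assumes unit: "\<And>i j. i < n \<Longrightarrow> j < n \<Longrightarrow> rect_ineq Q i (Suc i) j (Suc j)"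
    and "i \<le> i'" "i' \<le> n" "j \<le> j'" "j' \<le> n"
  shows "rect_ineq Q i i' j j'"
proof -
  have strip: "rect_ineq Q k (Suc k) j j'" if "k < n" for k
    using \<open>j \<le> j'\<close> \<open>j' \<le> n\<close>
  proof (induction j' rule: dec_induct)
    case (step l)
    with unit[of k l] \<open>k < n\<close> show ?case by (simp add: rect_ineq_def)
  qed (simp add: rect_ineq_def)
  show ?thesis
    using \<open>i \<le> i'\<close> \<open>i' \<le> n\<close>
  proof (induction i' rule: dec_induct)
    case (step k)
    with strip[of k] show ?case by (simp add: rect_ineq_def)
  qed (simp add: rect_ineq_def)
qed

lemma mono_lipschitz_of_unit_steps:
  fixes f :: "nat \<Rightarrow> real"
  assumes steps: "\<And>k. k < n \<Longrightarrow> f k \<le> f (Suc k) \<and> f (Suc k) \<le> f k + 1"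
    and "i \<le> i'" "i' \<le> n"
  shows "f i \<le> f i' \<and> f i' \<le> f i + real (i' - i)"
  using \<open>i \<le> i'\<close> \<open>i' \<le> n\<close>
proof (induction i' rule: dec_induct)
  case (step k)
  with steps[of k] show ?case by (auto simp: of_nat_diff)
qed simp

definition grid_lipschitz :: "nat \<Rightarrow> (nat \<Rightarrow> nat \<Rightarrow> real) \<Rightarrow> bool" where
  "grid_lipschitz n Q \<longleftrightarrow> (\<forall>i i' j. i \<le> i' \<and> i' \<le> n \<and> j \<le> n \<longrightarrow> Q i' j \<le> Q i j + real (i' - i))
      \<and> (\<forall>i j j'. i \<le> n \<and> j \<le> j' \<and> j' \<le> n \<longrightarrow> Q i j' \<le> Q i j + real (j' - j))"

lemma discrete_quasi_copula_iff_lipschitz: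
  "discrete_quasi_copula n Q \<longleftrightarrow>
     on_grid n Q \<and> boundary_cond n Q \<and> nondecr n Q \<and> grid_lipschitz n Q"
proof (cases "boundary_cond n Q")
  case True
  then have bc: "Q x 0 = 0" "Q 0 x = 0" "Q x n = real x" "Q n x = real x" if "x \<le> n" for x
    using that unfolding boundary_cond_def by auto
  have on_border: "i \<in> {0, n} \<or> i' \<in> {0, n} \<or> j \<in> {0, n} \<or> j' \<in> {0, n} \<longleftrightarrow>
      i = 0 \<or> j = 0 \<or> i' = n \<or> j' = n"
    if "i \<le> i'" "i' \<le> n" "j \<le> j'" "j' \<le> n" for i i' j j' :: nat
    using that by auto
  have rect_lipschitz_col: "rect_ineq Q i n j j' \<longleftrightarrow> Q i j' \<le> Q i j + real (j' - j)"
    if "j \<le> j'" "j' \<le> n" for i j j'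
    using that bc by (auto simp: rect_ineq_def of_nat_diff)
  have rect_lipschitz_row: "rect_ineq Q i i' j n \<longleftrightarrow> Q i' j \<le> Q i j + real (i' - i)"
    if "i \<le> i'" "i' \<le> n" for i i' j
    using that bc by (auto simp: rect_ineq_def of_nat_diff)
  have rect_mono_col: "rect_ineq Q 0 i' j j' \<longleftrightarrow> Q i' j \<le> Q i' j'"
    if "j \<le> n" "j' \<le> n" for i' j j'
    using that bc by (auto simp: rect_ineq_def)
  have rect_mono_row: "rect_ineq Q i i' 0 j' \<longleftrightarrow> Q i j' \<le> Q i' j'"
    if "i \<le> n" "i' \<le> n" for i i' j'
    using that bc by (auto simp: rect_ineq_def)
  show ?thesis
  proof
    assume "discrete_quasi_copula n Q"
    then have border: "rect_ineq Q i i' j j'"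
      if "i \<le> i'" "i' \<le> n" "j \<le> j'" "j' \<le> n" "i' = n \<or> j' = n" for i i' j j'
      using that unfolding discrete_quasi_copula_def by blast
    have "grid_lipschitz n Q"
      unfolding grid_lipschitz_def
    proof (intro conjI allI impI)
      fix i i' j assume "i \<le> i' \<and> i' \<le> n \<and> j \<le> n"
      then show "Q i' j \<le> Q i j + real (i' - i)"
        using border[of i i' j n] rect_lipschitz_row[of i i' j] by simp
    next
      fix i j j' assume "i \<le> n \<and> j \<le> j' \<and> j' \<le> n"
      then show "Q i j' \<le> Q i j + real (j' - j)"
        using border[of i n j j'] rect_lipschitz_col[of j j' i] by simp
    qed
    with \<open>discrete_quasi_copula n Q\<close> show "on_grid n Q \<and> boundary_cond n Q \<and> nondecr n Q \<and> grid_lipschitz n Q"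
      unfolding discrete_quasi_copula_def by blast
  next
    assume props: "on_grid n Q \<and> boundary_cond n Q \<and> nondecr n Q \<and> grid_lipschitz n Q"
    have "rect_ineq Q i i' j j'"
      if "i \<le> i'" "i' \<le> n" "j \<le> j'" "j' \<le> n" "i = 0 \<or> j = 0 \<or> i' = n \<or> j' = n" for i i' j j'
      using that(5)
    proof (elim disjE)
      assume "i = 0" then show ?thesis
        using that props rect_mono_col[of j j' i'] unfolding nondecr_def by auto
    next
      assume "j = 0" then show ?thesis
        using that props rect_mono_row[of i i' j'] unfolding nondecr_def by auto
    next
      assume "i' = n" then show ?thesis
        using that props rect_lipschitz_col[of j j' i] unfolding grid_lipschitz_def by auto
    next
      assume "j' = n" then show ?thesis
        using that props rect_lipschitz_row[of i i' j] unfolding grid_lipschitz_def by auto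
    qed
    with props on_border show "discrete_quasi_copula n Q"
      unfolding discrete_quasi_copula_def by blast
  qed
qed (simp add: discrete_quasi_copula_def)

lemma discrete_quasi_copula_of_unit_steps:
  fixes Q :: "nat \<Rightarrow> nat \<Rightarrow> real"
  assumes "on_grid n Q" "boundary_cond n Q"
    and row_steps: "\<And>i j. i < n \<Longrightarrow> j \<le> n \<Longrightarrow> Q i j \<le> Q (Suc i) j \<and> Q (Suc i) j \<le> Q i j + 1"
    and col_steps: "\<And>i j. i \<le> n \<Longrightarrow> j < n \<Longrightarrow> Q i j \<le> Q i (Suc j) \<and> Q i (Suc j) \<le> Q i j + 1"
  shows "discrete_quasi_copula n Q"
proof -
  have rows: "Q i j \<le> Q i' j \<and> Q i' j \<le> Q i j + real (i' - i)"
    if "i \<le> i'" "i' \<le> n" "j \<le> n" for i i' j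
    using mono_lipschitz_of_unit_steps[of n "\<lambda>i. Q i j"] row_steps that by blast
  have cols: "Q i j \<le> Q i j' \<and> Q i j' \<le> Q i j + real (j' - j)"
    if "j \<le> j'" "j' \<le> n" "i \<le> n" for i j j'
    using mono_lipschitz_of_unit_steps[of n "\<lambda>j. Q i j"] col_steps that by blast
  have "nondecr n Q" "grid_lipschitz n Q"
    unfolding nondecr_def grid_lipschitz_def using rows cols by auto
  with assms(1,2) show ?thesis
    unfolding discrete_quasi_copula_iff_lipschitz by blast
qed

lemma irreducible_iff_values_in_grid:
  assumes "boundary_cond n Q"
  shows "irreducible n Q \<longleftrightarrow> (\<forall>i\<le>n. \<forall>j\<le>n. Q i j \<in> real ` {0..n})"
proof
  assume "irreducible n Q"
  then show "\<forall>i\<le>n. \<forall>j\<le>n. Q i j \<in> real ` {0..n}"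
    unfolding irreducible_def by (metis (no_types, lifting) atLeastAtMost_iff
        case_prod_conv image_eqI le0 mem_Sigma_iff)
next
  assume in_range: "\<forall>i\<le>n. \<forall>j\<le>n. Q i j \<in> real ` {0..n}"
  have "real k \<in> (\<lambda>(i, j). Q i j) ` ({0..n} \<times> {0..n})" if "k \<le> n" for k
  proof -
    have "Q k n = real k" using assms that unfolding boundary_cond_def by blast
    with that show ?thesis by (metis (no_types, lifting) atLeastAtMost_iff
        case_prod_conv image_eqI le0 mem_Sigma_iff order_refl)
  qed
  with in_range show "irreducible n Q" unfolding irreducible_def by auto
qed

lemma pointwise_selection_in_QQ:
  fixes h :: "real \<Rightarrow> real \<Rightarrow> real"
  assumes select: "\<And>a b. h a b = a \<or> h a b = b"
    and mono: "\<And>a b c d. a \<le> c \<Longrightarrow> b \<le> d \<Longrightarrow> h a b \<le> h c d"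
    and shift: "\<And>a b c. h (a + c) (b + c) = h a b + c"
    and "P \<in> QQ n" "Q \<in> QQ n"
  shows "(\<lambda>i j. h (P i j) (Q i j)) \<in> QQ n"
proof -
  define Z where "Z = (\<lambda>i j. h (P i j) (Q i j))"
  have idem: "h a a = a" for a using select by metis
  have P: "on_grid n P" "boundary_cond n P" "nondecr n P" "grid_lipschitz n P" "irreducible n P"
    and Q: "on_grid n Q" "boundary_cond n Q" "nondecr n Q" "grid_lipschitz n Q" "irreducible n Q"
    using \<open>P \<in> QQ n\<close> \<open>Q \<in> QQ n\<close>
    unfolding QQ_def discrete_quasi_copula_iff_lipschitz by auto
  have "on_grid n Z"
    unfolding on_grid_def
  proof (intro conjI allI impI)
    fix i j
    assume "n < i \<or> n < j"
    then show "Z i j = 0" using P(1) Q(1) idem unfolding on_grid_def Z_def by auto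
  next
    fix i j
    assume "i \<le> n" "j \<le> n"
    then show "0 \<le> Z i j" "Z i j \<le> real n"
      using P(1) Q(1) select[of "P i j" "Q i j"] unfolding on_grid_def Z_def by auto
  qed
  moreover have bc: "boundary_cond n Z"
    using P(2) Q(2) idem unfolding boundary_cond_def Z_def by auto
  moreover have "nondecr n Z"
    using P(3) Q(3) mono unfolding nondecr_def Z_def by auto
  moreover have "grid_lipschitz n Z"
  proof -
    have shifted: "h a b \<le> h a' b' + c" if "a \<le> a' + c" "b \<le> b' + c" for a b a' b' c
      using mono[OF that] shift by simp
    show ?thesis
      unfolding grid_lipschitz_def
    proof (intro conjI allI impI)
      fix i i' j
      assume "i \<le> i' \<and> i' \<le> n \<and> j \<le> n"
      then show "Z i' j \<le> Z i j + real (i' - i)"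
        using P(4) Q(4) shifted unfolding grid_lipschitz_def Z_def by simp
    next
      fix i j j'
      assume "i \<le> n \<and> j \<le> j' \<and> j' \<le> n"
      then show "Z i j' \<le> Z i j + real (j' - j)"
        using P(4) Q(4) shifted unfolding grid_lipschitz_def Z_def by simp
    qed
  qed
  moreover have "irreducible n Z"
  proof -
    have "Z i j \<in> real ` {0..n}" if "i \<le> n" "j \<le> n" for i j
      using P(5) Q(5) that select[of "P i j" "Q i j"]
      unfolding irreducible_iff_values_in_grid[OF P(2)] irreducible_iff_values_in_grid[OF Q(2)] Z_def
      by auto
    then show ?thesis using irreducible_iff_values_in_grid[OF bc] by blast
  qed
  ultimately show ?thesis
    unfolding Z_def QQ_def discrete_quasi_copula_iff_lipschitz by blast
qed


lemma lattice_QQ: "lattice_on (QQ n) (conc_le n)"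
  unfolding lattice_on_def
proof (intro ballI conjI)
  fix P Q assume P: "P \<in> QQ n" and Q: "Q \<in> QQ n"
  have "(\<lambda>i j. max (P i j) (Q i j)) \<in> QQ n"
    by (rule pointwise_selection_in_QQ[OF _ _ _ P Q]) (auto simp: max_def)
  moreover have "(\<lambda>i j. min (P i j) (Q i j)) \<in> QQ n"
    by (rule pointwise_selection_in_QQ[OF _ _ _ P Q]) (auto simp: min_def)
  ultimately
  show "\<exists>Z. is_lub_in (QQ n) (conc_le n) P Q Z" "\<exists>Z. is_glb_in (QQ n) (conc_le n) P Q Z"
    unfolding is_lub_in_def is_glb_in_def conc_le_def by fastforce+
qed

(* A table t is a square matrix read with 1-based indices and extended by 0;
   min_minus_table n t is M(i,j) = min(i,j) minus t, so for length t < n the boundary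
   of the grid is untouched. *)
definition table_entry :: "nat list list \<Rightarrow> nat \<Rightarrow> nat \<Rightarrow> nat" where
  "table_entry t i j =
     (if 1 \<le> i \<and> i \<le> length t \<and> 1 \<le> j \<and> j \<le> length t then t ! (i - 1) ! (j - 1) else 0)"

definition min_minus_table :: "nat \<Rightarrow> nat list list \<Rightarrow> nat \<Rightarrow> nat \<Rightarrow> real" where
  "min_minus_table n t i j =
     (if i \<le> n \<and> j \<le> n then real (min i j) - real (table_entry t i j) else 0)"

definition table_below_min :: "nat list list \<Rightarrow> bool" where
  "table_below_min t \<longleftrightarrow> (\<forall>i\<le>length t. \<forall>j\<le>length t. table_entry t i j \<le> min i j)"

(* M has mass 1 exactly on the diagonal unit squares and its unit increments are [i < j]
   and [j < i]; so these conditions say that M - t is 2-increasing on unit squares,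
   resp. has unit increments in [0, 1]. *)
definition copula_table :: "nat list list \<Rightarrow> bool" where
  "copula_table t \<longleftrightarrow> (\<forall>i\<le>length t. \<forall>j\<le>length t.
     table_entry t i j + table_entry t (Suc i) (Suc j)
       \<le> table_entry t i (Suc j) + table_entry t (Suc i) j + (if i = j then 1 else 0))"

definition quasi_copula_table :: "nat list list \<Rightarrow> bool" where
  "quasi_copula_table t \<longleftrightarrow> (\<forall>i\<le>length t. \<forall>j\<le>length t.
     table_entry t (Suc i) j \<le> table_entry t i j + (if i < j then 1 else 0) \<and>
     table_entry t i j + (if i < j then 1 else 0) \<le> table_entry t (Suc i) j + 1 \<and>
     table_entry t i (Suc j) \<le> table_entry t i j + (if j < i then 1 else 0) \<and>
     table_entry t i j + (if j < i then 1 else 0) \<le> table_entry t i (Suc j) + 1)"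

lemma table_entry_outside:
  "i = 0 \<or> j = 0 \<or> length t < i \<or> length t < j \<Longrightarrow> table_entry t i j = 0"
  unfolding table_entry_def by auto

lemma table_below_min_everywhere: "table_below_min t \<Longrightarrow> table_entry t i j \<le> min i j"
  using table_entry_outside[of i j t] unfolding table_below_min_def
  by (cases "i \<le> length t \<and> j \<le> length t") auto

lemma min_minus_table_grid_facts:
  assumes "length t < n" "table_below_min t"
  shows "on_grid n (min_minus_table n t)" "boundary_cond n (min_minus_table n t)"
    "irreducible n (min_minus_table n t)"
proof -
  have val: "min_minus_table n t i j = real (min i j - table_entry t i j)" if "i \<le> n" "j \<le> n" for i j
    using that table_below_min_everywhere[OF assms(2), of i j]
    unfolding min_minus_table_def by (simp add: of_nat_diff)
  show "on_grid n (min_minus_table n t)"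
    unfolding on_grid_def using val by (auto simp: min_minus_table_def)
  show bc: "boundary_cond n (min_minus_table n t)"
    unfolding boundary_cond_def min_minus_table_def using assms(1) table_entry_outside[of _ _ t]
    by (auto simp: min_def)
  show "irreducible n (min_minus_table n t)"
    unfolding irreducible_iff_values_in_grid[OF bc] using val by auto
qed

lemma min_minus_table_in_PP:
  assumes "length t < n" "table_below_min t" "copula_table t"
  shows "min_minus_table n t \<in> PP n"
proof -
  have cell: "table_entry t i j + table_entry t (Suc i) (Suc j)
      \<le> table_entry t i (Suc j) + table_entry t (Suc i) j + (if i = j then 1 else 0)" for i j
    using assms(3) table_entry_outside[of _ _ t] unfolding copula_table_def
    by (cases "i \<le> length t \<and> j \<le> length t") auto
  have "rect_ineq (min_minus_table n t) i (Suc i) j (Suc j)" if "i < n" "j < n" for i j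
  proof -
    have "real (min i j) + real (min (Suc i) (Suc j))
        = real (min i (Suc j)) + real (min (Suc i) j) + (if i = j then 1 else 0)"
      by (auto simp: min_def)
    moreover note of_nat_mono[OF cell[of i j], where 'a = real]
    ultimately show ?thesis
      using that unfolding rect_ineq_def min_minus_table_def by (auto split: if_splits)
  qed
  then show ?thesis
    unfolding PP_def discrete_copula_def
    using min_minus_table_grid_facts[OF assms(1,2)] rect_ineq_of_unit_squares by blast
qed

lemma min_minus_table_in_QQ:
  assumes "length t < n" "table_below_min t" "quasi_copula_table t"
  shows "min_minus_table n t \<in> QQ n"
proof -
  have steps: "table_entry t (Suc i) j \<le> table_entry t i j + (if i < j then 1 else 0) \<and>
     table_entry t i j + (if i < j then 1 else 0) \<le> table_entry t (Suc i) j + 1 \<and>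
     table_entry t i (Suc j) \<le> table_entry t i j + (if j < i then 1 else 0) \<and>
     table_entry t i j + (if j < i then 1 else 0) \<le> table_entry t i (Suc j) + 1" for i j
    using assms(3) table_entry_outside[of _ _ t] unfolding quasi_copula_table_def
    by (cases "i \<le> length t \<and> j \<le> length t") auto
  have "discrete_quasi_copula n (min_minus_table n t)"
  proof (rule discrete_quasi_copula_of_unit_steps[OF min_minus_table_grid_facts(1,2)[OF assms(1,2)]])
    fix i j assume "i < n" "j \<le> n"
    then show "min_minus_table n t i j \<le> min_minus_table n t (Suc i) j \<and>
        min_minus_table n t (Suc i) j \<le> min_minus_table n t i j + 1"
      using steps[of i j] unfolding min_minus_table_def by (auto simp: min_def split: if_splits)
  next
    fix i j assume "i \<le> n" "j < n"
    then show "min_minus_table n t i j \<le> min_minus_table n t i (Suc j) \<and>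
        min_minus_table n t i (Suc j) \<le> min_minus_table n t i j + 1"
      using steps[of i j] unfolding min_minus_table_def by (auto simp: min_def split: if_splits)
  qed
  then show ?thesis
    unfolding QQ_def using min_minus_table_grid_facts(3)[OF assms(1,2)] by blast
qed

lemma min_minus_table_mono:
  assumes "length s = length t" "\<forall>i\<le>length t. \<forall>j\<le>length t. table_entry s i j \<le> table_entry t i j"
  shows "conc_le n (min_minus_table n t) (min_minus_table n s)"
proof -
  have "table_entry s i j \<le> table_entry t i j" for i j
    using assms table_entry_outside[of i j] by (cases "i \<le> length t \<and> j \<le> length t") auto
  then show ?thesis unfolding conc_le_def min_minus_table_def by auto
qed

lemma min_minus_table_inf:
  assumes "length s = length t" "length u = length t"
    and "\<forall>i\<le>length t. \<forall>j\<le>length t. table_entry t i j = max (table_entry s i j) (table_entry u i j)"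
  shows "min_minus_table n t i j = min (min_minus_table n s i j) (min_minus_table n u i j)"
  using assms table_entry_outside[of i j]
  by (cases "i \<le> length t \<and> j \<le> length t") (auto simp: min_minus_table_def max_def)

lemma min_minus_table_sup:
  assumes "length s = length t" "length u = length t"
    and "\<forall>i\<le>length t. \<forall>j\<le>length t. table_entry t i j = min (table_entry s i j) (table_entry u i j)"
  shows "min_minus_table n t i j = max (min_minus_table n s i j) (min_minus_table n u i j)"
  using assms table_entry_outside[of i j]
  by (cases "i \<le> length t \<and> j \<le> length t") (auto simp: min_minus_table_def min_def)

lemma conc_le_antisym:
  assumes "on_grid n P" "on_grid n Q" "conc_le n P Q" "conc_le n Q P"
  shows "P = Q"
proof (intro ext)
  fix i j
  show "P i j = Q i j"
    using assms unfolding on_grid_def conc_le_def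
    by (cases "i \<le> n \<and> j \<le> n") (auto intro: order.antisym)
qed

lemma all_le_Suc: "(\<forall>i\<le>Suc n. P i) \<longleftrightarrow> P (Suc n) \<and> (\<forall>i\<le>n. P i)"
  by (auto simp: le_Suc_eq)

lemmas table_eval = table_entry_def table_below_min_def copula_table_def quasi_copula_table_def
  all_le_Suc

lemma lattice_on_interpolation:
  assumes "lattice_on S le" "x \<in> S" "y \<in> S" "a \<in> S" "b \<in> S"
    and "le x a" "le y a" "le x b" "le y b"
  obtains z where "z \<in> S" "le x z" "le y z" "le z a" "le z b"
  using assms unfolding lattice_on_def is_lub_in_def by meson

lemma not_lattice_PP:
  assumes "3 \<le> n"
  shows "\<not> lattice_on (PP n) (conc_le n)"
proof
  assume lattice: "lattice_on (PP n) (conc_le n)"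
  \<comment> \<open>the copulas of the permutations 231, 312, 132, 213, extended by the identity\<close>
  let ?X = "min_minus_table n [[1,0],[1,1]]" and ?Y = "min_minus_table n [[1,1],[0,1]]"
    and ?A = "min_minus_table n [[0,0],[0,1]]" and ?B = "min_minus_table n [[1,0],[0,0]]"
  have "?X \<in> PP n" "?Y \<in> PP n" "?A \<in> PP n" "?B \<in> PP n"
    using assms by (auto intro!: min_minus_table_in_PP simp: table_eval)
  moreover have "conc_le n ?X ?A" "conc_le n ?Y ?A" "conc_le n ?X ?B" "conc_le n ?Y ?B"
    by (rule min_minus_table_mono; simp add: table_eval)+
  ultimately obtain Z where Z: "Z \<in> PP n" "conc_le n ?X Z" "conc_le n ?Y Z"
    "conc_le n Z ?A" "conc_le n Z ?B"
    by (rule lattice_on_interpolation[OF lattice])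
  then have "Z 1 1 \<le> ?B 1 1" "Z 2 2 \<le> ?A 2 2" "?X 1 2 \<le> Z 1 2" "?Y 2 1 \<le> Z 2 1"
    using assms unfolding conc_le_def by auto
  then have "Z 1 1 \<le> 0" "Z 2 2 \<le> 1" "1 \<le> Z 1 2" "1 \<le> Z 2 1"
    using assms by (simp_all add: min_minus_table_def table_entry_def)
  moreover have "rect_ineq Z 1 2 1 2"
    using Z(1) assms unfolding PP_def discrete_copula_def by auto
  ultimately show False unfolding rect_ineq_def by linarith
qed

lemma not_lattice_QQ_minus_PP:
  assumes "4 \<le> n"
  shows "\<not> lattice_on (QQ n - PP n) (conc_le n)"
proof
  assume lattice: "lattice_on (QQ n - PP n) (conc_le n)"
  let ?X = "min_minus_table n [[1,1,0],[1,1,1],[0,0,1]]"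
    and ?Y = "min_minus_table n [[1,0,0],[1,1,1],[0,1,1]]"
    and ?A = "min_minus_table n [[1,0,0],[1,1,0],[0,0,1]]"
    and ?B = "min_minus_table n [[1,0,0],[0,1,1],[0,0,1]]"
    and ?M = "min_minus_table n [[1,0,0],[1,1,1],[0,0,1]]"
  have "?X \<in> QQ n" "?Y \<in> QQ n" "?A \<in> QQ n" "?B \<in> QQ n"
    using assms by (auto intro!: min_minus_table_in_QQ simp: table_eval)
  moreover have "?X \<notin> PP n" "?Y \<notin> PP n" "?A \<notin> PP n" "?B \<notin> PP n"
  proof -
    have "\<not> rect_ineq ?X 1 2 2 3" "\<not> rect_ineq ?Y 2 3 1 2"
      "\<not> rect_ineq ?A 2 3 2 3" "\<not> rect_ineq ?B 1 2 1 2"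
      using assms by (simp_all add: rect_ineq_def min_minus_table_def table_entry_def)
    then show "?X \<notin> PP n" "?Y \<notin> PP n" "?A \<notin> PP n" "?B \<notin> PP n"
      using assms unfolding PP_def discrete_copula_def by auto
  qed
  ultimately have "?X \<in> QQ n - PP n" "?Y \<in> QQ n - PP n" "?A \<in> QQ n - PP n" "?B \<in> QQ n - PP n"
    by simp_all
  moreover have "conc_le n ?X ?A" "conc_le n ?Y ?A" "conc_le n ?X ?B" "conc_le n ?Y ?B"
    by (rule min_minus_table_mono; simp add: table_eval)+
  ultimately obtain Z where Z: "Z \<in> QQ n - PP n" "conc_le n ?X Z" "conc_le n ?Y Z"
    "conc_le n Z ?A" "conc_le n Z ?B"
    by (rule lattice_on_interpolation[OF lattice])
  have sup: "?M i j = max (?X i j) (?Y i j)" for i j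
    by (rule min_minus_table_sup; simp add: table_eval)
  have inf: "?M i j = min (?A i j) (?B i j)" for i j
    by (rule min_minus_table_inf; simp add: table_eval)
  have "conc_le n ?M Z"
    using Z(2,3) unfolding conc_le_def sup by simp
  moreover have "conc_le n Z ?M"
    using Z(4,5) unfolding conc_le_def inf by simp
  moreover have "?M \<in> PP n"
    using assms by (auto intro!: min_minus_table_in_PP simp: table_eval)
  moreover have "on_grid n Z"
    using Z(1) unfolding QQ_def discrete_quasi_copula_def by blast
  ultimately have "Z = ?M"
    using conc_le_antisym unfolding PP_def discrete_copula_def by blast
  with Z(1) \<open>?M \<in> PP n\<close> show False by simp
qed


theorem theorem2:
  shows "(\<forall>n::nat. n \<ge> 1 \<longrightarrow> lattice_on (QQ n) (conc_le n))
       \<and> (\<forall>n::nat. n \<ge> 3 \<longrightarrow> \<not> lattice_on (PP n) (conc_le n))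
       \<and> (\<forall>n::nat. n \<ge> 4 \<longrightarrow> \<not> lattice_on (QQ n - PP n) (conc_le n))"
  using lattice_QQ not_lattice_PP not_lattice_QQ_minus_PP by blast

end
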